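(* Let $\gamma$ be an admissible path. Then for any $t$ and $s$ in the domain of $\gamma$ with $t<s<t+\pi$, we have $|\gamma(s)-\gamma(t)|\ge 2\sin\frac{s-t}{2}$.
   Context: An admissible path is a continuously differentiable planar curve $\gamma$ parameterized by arclength (so $\gamma'(t)$ is a unit tangent vector) such that for all $t<s<t+\pi$ in its domain, the angle $\alpha(s,t)$ between the directions $\gamma'(s)$ and $\gamma'(t)$ satisfies $\alpha(s,t)\le s-t$ (mean curvature bounded by 1). *)

theory Defs
  imports "HOL-Analysis.Analysis"
begin

definition vec_angle :: "complex \<Rightarrow> complex \<Rightarrow> real" where
  "vec_angle u v = arccos ((u \<bullet> v) / (norm u * norm v))"

definition admissible_path :: "real set \<Rightarrow> (real \<Rightarrow> complex) \<Rightarrow> (real \<Rightarrow> complex) \<Rightarrow> bool" where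
  "admissible_path I \<gamma> \<gamma>' \<longleftrightarrow>
     is_interval I \<and>
     (\<forall>t\<in>I. (\<gamma> has_vector_derivative \<gamma>' t) (at t within I)) \<and>
     continuous_on I \<gamma>' \<and>
     (\<forall>t\<in>I. norm (\<gamma>' t) = 1) \<and>
     (\<forall>t\<in>I. \<forall>s\<in>I. t < s \<and> s < t + pi \<longrightarrow> vec_angle (\<gamma>' s) (\<gamma>' t) \<le> s - t)"

end

theory Submission
  imports Defs
begin

text \<open>Compare \<gamma> with the unit-speed circular arc through the midpoint tangent
  u = \<gamma>'(m), m = (s + t)/2. The curvature bound puts every tangent \<gamma>'(r), r \<in> [t, s],
  within angle |r - m| < \<pi>/2 of u, so the component of \<gamma>' along u is at least
  cos (r - m). Integrating, the chord \<gamma> s - \<gamma> t has component at least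
  sin (s - m) - sin (t - m) = 2 sin ((s - t)/2) along the unit vector u.\<close>

lemma vec_angle_commute: "vec_angle u v = vec_angle v u"
  unfolding vec_angle_def by (simp add: inner_commute mult.commute)

lemma abs_inner_div_norms_le_1:
  fixes u v :: complex
  shows "\<bar>(u \<bullet> v) / (norm u * norm v)\<bar> \<le> 1"
  using Cauchy_Schwarz_ineq2[of u v]
  by (cases "u = 0 \<or> v = 0") (auto simp: abs_mult divide_le_eq_1)

lemma vec_angle_nonneg: "0 \<le> vec_angle u v"
  unfolding vec_angle_def using abs_inner_div_norms_le_1[of u v] by (intro arccos_lbound) linarith+

lemma cos_vec_angle: "cos (vec_angle u v) = (u \<bullet> v) / (norm u * norm v)"
  unfolding vec_angle_def using abs_inner_div_norms_le_1[of u v] by (rule cos_arccos_abs)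

lemma vec_angle_self: "u \<noteq> 0 \<Longrightarrow> vec_angle u u = 0"
  unfolding vec_angle_def by (simp add: dot_square_norm power2_eq_square)

lemma admissible_path_tangent_inner_ge_cos:
  assumes "admissible_path I \<gamma> \<gamma>'" and "a \<in> I" and "b \<in> I" and "\<bar>a - b\<bar> < pi"
  shows "cos (a - b) \<le> \<gamma>' a \<bullet> \<gamma>' b"
proof -
  have unit: "norm (\<gamma>' a) = 1" "norm (\<gamma>' b) = 1"
    using assms(1-3) unfolding admissible_path_def by auto
  have angle_le: "vec_angle (\<gamma>' a) (\<gamma>' b) \<le> \<bar>a - b\<bar>"
  proof (cases a b rule: linorder_cases)
    case equal
    moreover have "\<gamma>' a \<noteq> 0" using unit by auto
    ultimately show ?thesis by (simp add: vec_angle_self)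
  next
    case less
    then show ?thesis using assms unfolding admissible_path_def
      by (simp add: vec_angle_commute)
  next
    case greater
    then show ?thesis using assms unfolding admissible_path_def by simp
  qed
  have "cos \<bar>a - b\<bar> \<le> cos (vec_angle (\<gamma>' a) (\<gamma>' b))"
    using angle_le vec_angle_nonneg assms(4) by (intro cos_monotone_0_pi_le) auto
  then show ?thesis using cos_vec_angle unit by simp
qed

lemma inner_increment_ge_by_derivative:
  fixes \<gamma> \<gamma>' :: "real \<Rightarrow> 'a::real_inner"
  assumes "t \<le> s"
    and \<gamma>_deriv: "\<And>r. r \<in> {t..s} \<Longrightarrow> (\<gamma> has_vector_derivative \<gamma>' r) (at r within {t..s})"
    and \<phi>_deriv: "\<And>r. (\<phi> has_real_derivative \<phi>' r) (at r)"
    and dominates: "\<And>r. r \<in> {t<..<s} \<Longrightarrow> \<phi>' r \<le> \<gamma>' r \<bullet> u"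
  shows "\<phi> s - \<phi> t \<le> (\<gamma> s - \<gamma> t) \<bullet> u"
proof -
  define g where "g r = \<gamma> r \<bullet> u - \<phi> r" for r
  have g_deriv: "(g has_real_derivative \<gamma>' r \<bullet> u - \<phi>' r) (at r within {t..s})"
    if "r \<in> {t..s}" for r
  proof -
    have "((\<lambda>x. \<gamma> x \<bullet> u) has_vector_derivative \<gamma>' r \<bullet> u) (at r within {t..s})"
      using bounded_linear.has_vector_derivative[OF bounded_linear_inner_left \<gamma>_deriv[OF that]] .
    then have "((\<lambda>x. \<gamma> x \<bullet> u) has_real_derivative \<gamma>' r \<bullet> u) (at r within {t..s})"
      by (simp add: has_real_derivative_iff_has_vector_derivative)
    from DERIV_diff[OF this has_field_derivative_at_within[OF \<phi>_deriv]]
    show ?thesis by (simp add: g_def [abs_def])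
  qed
  have "g t \<le> g s"
  proof (rule DERIV_nonneg_imp_increasing_open[OF \<open>t \<le> s\<close>])
    fix x assume x: "t < x" "x < s"
    have "(g has_real_derivative \<gamma>' x \<bullet> u - \<phi>' x) (at x within {t<..<s})"
      by (rule DERIV_subset[OF g_deriv]) (use x in auto)
    then have "(g has_real_derivative \<gamma>' x \<bullet> u - \<phi>' x) (at x)"
      using x by (simp add: at_within_open[of x "{t<..<s}"])
    moreover have "0 \<le> \<gamma>' x \<bullet> u - \<phi>' x" using dominates x by simp
    ultimately show "\<exists>y. (g has_real_derivative y) (at x) \<and> 0 \<le> y" by blast
  next
    show "continuous_on {t..s} g"
      unfolding continuous_on_eq_continuous_within using DERIV_continuous[OF g_deriv] by blast
  qed
  then show ?thesis unfolding g_def by (simp add: inner_diff_left)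
qed

theorem lemma15:
  fixes I :: "real set" and \<gamma> \<gamma>' :: "real \<Rightarrow> complex" and s t :: real
  assumes "admissible_path I \<gamma> \<gamma>'"
    and "t \<in> I" and "s \<in> I" and "t < s" and "s < t + pi"
  shows "norm (\<gamma> s - \<gamma> t) \<ge> 2 * sin ((s - t) / 2)"
proof -
  have segment: "{t..s} \<subseteq> I"
    using assms(1-3) unfolding admissible_path_def by (meson atLeastAtMost_iff is_interval_1 subsetI)
  define m where "m = (s + t) / 2"
  define u where "u = \<gamma>' m"
  have "m \<in> I" using segment assms(4) by (auto simp: m_def)
  have unit_u: "norm u = 1"
    using assms(1) \<open>m \<in> I\<close> unfolding admissible_path_def u_def by blast
  have "s - m = (s - t) / 2" and "t - m = - ((s - t) / 2)"
    by (simp_all add: m_def field_simps)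
  then have "2 * sin ((s - t) / 2) = sin (s - m) - sin (t - m)"
    by (simp only:) simp
  also have "\<dots> \<le> (\<gamma> s - \<gamma> t) \<bullet> u"
  proof (rule inner_increment_ge_by_derivative)
    fix r assume "r \<in> {t..s}"
    then show "(\<gamma> has_vector_derivative \<gamma>' r) (at r within {t..s})"
      using assms(1) segment unfolding admissible_path_def
      by (meson has_vector_derivative_within_subset subsetD)
  next
    fix r assume r: "r \<in> {t<..<s}"
    then have "r \<in> I" using segment by auto
    moreover have "\<bar>r - m\<bar> < pi" using r assms(5) by (simp add: m_def abs_less_iff field_simps)
    ultimately show "cos (r - m) \<le> \<gamma>' r \<bullet> u"
      using admissible_path_tangent_inner_ge_cos[OF assms(1) _ \<open>m \<in> I\<close>] by (simp add: u_def)
  qed (use assms(4) in \<open>auto intro!: derivative_eq_intros\<close>)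
  also have "\<dots> \<le> norm (\<gamma> s - \<gamma> t)"
    using norm_cauchy_schwarz[of "\<gamma> s - \<gamma> t" u] unit_u by simp
  finally show ?thesis .
qed

end
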